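(* Let $\mathbf{X}=\{\mathbf{x}\in\mathbb{R}^n:0\le g^{\mathbf{X}}_i(\mathbf{x})\le1,\ i=1,\dots,p\}\subseteq[0,1]^n$ be a compact basic semialgebraic set, where $g^{\mathbf{X}}_1,\dots,g^{\mathbf{X}}_p\in\mathbb{R}[\mathbf{x}]$ and the coordinate polynomials $x_1,\dots,x_n$ are among the $g^{\mathbf{X}}_i$. Let $f\in\mathbb{R}[\mathbf{x}]$ have degree $d$, let $s_1,\dots,s_m\in\mathbb{R}[\mathbf{x}]$ be the polynomials $s_j(\mathbf{x})=\frac{\partial r}{\partial e_j}(\mathbf{x},\mathbf{0})$ arising from its roundoff error $r$, let $l'(\mathbf{x},\mathbf{e})=\sum_{j=1}^m s_j(\mathbf{x})e_j$, and $\mathbf{K}=\mathbf{X}\times[-1,1]^m$. For $k\ge d+1$ let $\underline{l}'_k:=\sup\{t\in\mathbb{R}: l'-t\in\mathcal{H}_k(\mathbf{K})\}$ and $\overline{l}'_k:=\inf\{t\in\mathbb{R}: t-l'\in\mathcal{H}_k(\mathbf{K})\}$. Then $(\underline{l}'_k)_{k\ge d+1}$ is nondecreasing and converges to $\underline{l}':=\min_{\mathbf{K}}l'$, and $(\overline{l}'_k)_{k\ge d+1}$ is nonincreasing and converges to $\overline{l}':=\max_{\mathbf{K}}l'$, as $k\to+\infty$. Consequently, for a machine precision $\varepsilon>0$, the intervals $I^l_k:=[\varepsilon\underline{l}'_k,\varepsilon\overline{l}'_k]$ converge to $[\underline{l},\overline{l}]$, where $\underline{l}$ and $\overline{l}$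 are the minimum and maximum of $l(\mathbf{x},\mathbf{e})=\sum_j s_j(\mathbf{x})e_j$ over $\mathbf{X}\times[-\varepsilon,\varepsilon]^m$.
   Context: Roundoff setting: $f$ is implemented in floating point; under the simple rounding model one introduces error variables $e_1,\dots,e_m$ (one per variable, constant and arithmetic operation), giving a rounded polynomial expression $\hat f(\mathbf{x},\mathbf{e})$ with $\hat f(\mathbf{x},\mathbf{0})=f(\mathbf{x})$ and $|e_j|\le\varepsilon$; $r=\hat f-f$; $l'$ is the linear part of $r$ in $\mathbf{e}$ after dividing each $e_j$ by $\varepsilon$. Sparse Krivine–Stengle set: write $\mathbf{y}=(\mathbf{x},\mathbf{e})\in\mathbb{R}^{n+m}$, $g_i(\mathbf{y})=g^{\mathbf{X}}_i(\mathbf{x})$ for $i\le p$, $g_{p+j}(\mathbf{y})=\frac12+\frac{e_j}{2}$ for $j\le m$, so $\mathbf{K}=\{\mathbf{y}:0\le g_i(\mathbf{y})\le1,\ i=1,\dots,p+m\}$. For $j=1,\dots,m$ let $J_j=\{1,\dots,p,p+j\}$ and for $\boldsymbol{\alpha},\boldsymbol{\beta}\in\mathbb{N}^{J_j}$ let $h^{(j)}_{\boldsymbol{\alpha},\boldsymbol{\beta}}=\prod_{i\in J_j}g_i^{\alpha_i}(1-g_i)^{\beta_i}$. $\mathcal{H}_k(\mathbf{K})$ is the set of polynomials of the form $\sum_{j=1}^m\sum_{|\boldsymbol{\alpha}+\boldsymbol{\beta}|\le k}\lambda^{(j)}_{\boldsymbol{\alpha},\boldsymbol{\beta}}h^{(j)}_{\boldsymbol{\alpha},\boldsymbol{\beta}}$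 with all $\lambda^{(j)}_{\boldsymbol{\alpha},\boldsymbol{\beta}}\ge0$ (finitely many terms), where $|\boldsymbol{\alpha}|=\sum_i\alpha_i$. *)

theory Defs
  imports "HOL-Analysis.Analysis"
begin

definition mpoly_eval :: "(('n::finite \<Rightarrow> nat) \<Rightarrow> real) \<Rightarrow> real^'n \<Rightarrow> real" where
  "mpoly_eval c x = (\<Sum>a\<in>{a. c a \<noteq> 0}. c a * (\<Prod>i\<in>UNIV. (x $ i) ^ a i))"

definition poly_fun_deg :: "nat \<Rightarrow> (real^'n::finite \<Rightarrow> real) \<Rightarrow> bool" where
  "poly_fun_deg d f \<longleftrightarrow> (\<exists>c. finite {a. c a \<noteq> 0} \<and>
      (\<forall>a. c a \<noteq> 0 \<longrightarrow> (\<Sum>i\<in>UNIV. a i) \<le> d) \<and> f = mpoly_eval c)"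

definition poly_fun :: "(real^'n::finite \<Rightarrow> real) \<Rightarrow> bool" where
  "poly_fun f \<longleftrightarrow> (\<exists>d. poly_fun_deg d f)"

text \<open>An index (j, alpha, a0, beta, b0) stands for
  h^(j)_{alpha,beta} with J_j = {1..p, p+j}: alpha, beta give the exponents on the
  g_i (i in 'p) and a0, b0 the exponents on g_{p+j}(y) = 1/2 + e_j/2.\<close>

type_synonym ('m, 'p) ks_index = "'m \<times> ('p \<Rightarrow> nat) \<times> nat \<times> ('p \<Rightarrow> nat) \<times> nat"

definition ks_gen :: "('p::finite \<Rightarrow> real^'n::finite \<Rightarrow> real) \<Rightarrow> ('m::finite, 'p) ks_index
     \<Rightarrow> (real^'n) \<times> (real^'m) \<Rightarrow> real" where
  "ks_gen g idx y = (case idx of (j, \<alpha>, a0, \<beta>, b0) \<Rightarrow>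
      (\<Prod>i\<in>UNIV. g i (fst y) ^ \<alpha> i * (1 - g i (fst y)) ^ \<beta> i)
      * (1/2 + snd y $ j / 2) ^ a0 * (1 - (1/2 + snd y $ j / 2)) ^ b0)"

definition ks_deg :: "('m::finite, 'p::finite) ks_index \<Rightarrow> nat" where
  "ks_deg idx = (case idx of (j, \<alpha>, a0, \<beta>, b0) \<Rightarrow>
      (\<Sum>i\<in>UNIV. \<alpha> i) + a0 + (\<Sum>i\<in>UNIV. \<beta> i) + b0)"

text \<open>H_k(K): nonnegative combinations of generators of degree at most k
  (identity of polynomial functions on all of R^(n+m)).\<close>
definition HK :: "('p::finite \<Rightarrow> real^'n::finite \<Rightarrow> real) \<Rightarrow> nat
     \<Rightarrow> ((real^'n) \<times> (real^'m::finite) \<Rightarrow> real) set" where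
  "HK g k = {F. \<exists>S c. finite S \<and> (\<forall>s\<in>S. ks_deg s \<le> k \<and> c s \<ge> 0) \<and>
                  F = (\<lambda>y. \<Sum>s\<in>S. c s * ks_gen g s y)}"

end

theory Submission
  imports Defs
begin

(* The k-th lower bound is the largest t such that l' - t is a nonnegative combination of
   sparse Krivine-Stengle generators of degree at most k; such combinations are nonnegative on K,
   so the bounds never exceed min_K l', and they increase with k. For convergence, l' + B + delta
   (with B = - min_K l') is split into blocks s_j(x) e_j + c_j(x), where the polynomials c_j
   dominate |s_j| on X and add up to B + delta (Stone-Weierstrass); each block involves x and a
   single e_j only. A block that is positive on X x [-1,1] is lifted to the unit cube in the
   variables g_1(x), ..., g_p(x), (1 + e_j)/2; adding a large multiple of the penalty
   sum_i (z_i - g_i(x))^2 makes it positive on the whole cube, and a polynomial positive on the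
   cube has nonnegative Bernstein coefficients in high degree, which evaluate to generators.
   The upper bounds are the negated lower bounds of -l', and the epsilon-version follows by
   rescaling the error box. *)

section \<open>Polynomial functions on real^'v\<close>

inductive coord_poly :: "(real^'v::finite \<Rightarrow> real) \<Rightarrow> bool" where
  const: "coord_poly (\<lambda>z. c)"
| coord: "coord_poly (\<lambda>z. z $ v)"
| add: "coord_poly f \<Longrightarrow> coord_poly g \<Longrightarrow> coord_poly (\<lambda>z. f z + g z)"
| mult: "coord_poly f \<Longrightarrow> coord_poly g \<Longrightarrow> coord_poly (\<lambda>z. f z * g z)"

lemma coord_poly_diff: "coord_poly f \<Longrightarrow> coord_poly g \<Longrightarrow> coord_poly (\<lambda>z. f z - g z)"
  using coord_poly.add[OF _ coord_poly.mult[OF coord_poly.const[of "-1"]]] by simp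

lemma coord_poly_power: "coord_poly f \<Longrightarrow> coord_poly (\<lambda>z. f z ^ n)"
  by (induction n) (auto intro: coord_poly.intros)

lemma coord_poly_sum: "(\<And>a. a \<in> A \<Longrightarrow> coord_poly (f a)) \<Longrightarrow> coord_poly (\<lambda>z. \<Sum>a\<in>A. f a z)"
  by (induction A rule: infinite_finite_induct) (auto intro: coord_poly.intros)

lemma coord_poly_prod: "(\<And>a. a \<in> A \<Longrightarrow> coord_poly (f a)) \<Longrightarrow> coord_poly (\<lambda>z. \<Prod>a\<in>A. f a z)"
  by (induction A rule: infinite_finite_induct) (auto intro: coord_poly.intros)

lemma coord_poly_compose:
  "coord_poly P \<Longrightarrow> (\<And>v. coord_poly (\<lambda>z. F z $ v)) \<Longrightarrow> coord_poly (\<lambda>z. P (F z))"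
  by (induction rule: coord_poly.induct) (auto intro: coord_poly.intros)

lemma coord_poly_compose_pair:
  fixes Q :: "real^'n::finite \<Rightarrow> real \<Rightarrow> real"
  assumes Q: "coord_poly (\<lambda>w::real^('n option). Q (\<chi> q. w $ Some q) (w $ None))"
    and x: "\<And>q. coord_poly (\<lambda>z. x z $ q)" and e: "coord_poly e"
  shows "coord_poly (\<lambda>z. Q (x z) (e z))"
proof -
  have "coord_poly (\<lambda>z. (\<chi> v. case v of Some q \<Rightarrow> x z $ q | None \<Rightarrow> e z) $ v)" for v
    using x e by (cases v) simp_all
  from coord_poly_compose[OF Q this] show ?thesis by simp
qed

lemma coord_poly_compose_real_polynomial_function:
  fixes h :: "real \<Rightarrow> real"
  shows "real_polynomial_function h \<Longrightarrow> coord_poly F \<Longrightarrow> coord_poly (\<lambda>z. h (F z))"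
proof (induction rule: real_polynomial_function.induct)
  case (linear f)
  then obtain c where "f = (\<lambda>x. x * c)" using real_bounded_linear by blast
  then show ?case using coord_poly.mult[OF linear(2) coord_poly.const] by simp
qed (auto intro: coord_poly.intros)

lemma continuous_on_coord_poly: "coord_poly f \<Longrightarrow> continuous_on S f"
  by (induction rule: coord_poly.induct) (auto intro!: continuous_intros)

lemma poly_fun_deg_imp_coord_poly: "poly_fun_deg d f \<Longrightarrow> coord_poly f"
  unfolding poly_fun_deg_def mpoly_eval_def
  by (auto intro!: coord_poly_sum coord_poly_prod coord_poly_power coord_poly.intros)

lemma poly_fun_imp_coord_poly: "poly_fun f \<Longrightarrow> coord_poly f"
  unfolding poly_fun_def using poly_fun_deg_imp_coord_poly by blast

definition monomial :: "('v::finite \<Rightarrow> nat) \<Rightarrow> real^'v \<Rightarrow> real" where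
  "monomial r z = (\<Prod>v\<in>UNIV. (z $ v) ^ r v)"

definition eval_terms :: "(real \<times> ('v::finite \<Rightarrow> nat)) list \<Rightarrow> real^'v \<Rightarrow> real" where
  "eval_terms L z = (\<Sum>p\<leftarrow>L. fst p * monomial (snd p) z)"

lemma monomial_add: "monomial (\<lambda>v. r v + r' v) z = monomial r z * monomial r' z"
  unfolding monomial_def by (simp add: power_add prod.distrib)

lemma eval_terms_mult:
  "eval_terms [(fst p * fst q, \<lambda>v. snd p v + snd q v). p \<leftarrow> L1, q \<leftarrow> L2] z
     = eval_terms L1 z * eval_terms L2 z"
proof (induction L1)
  case (Cons p L1)
  have "eval_terms [(fst p * fst q, \<lambda>v. snd p v + snd q v). q \<leftarrow> L2] z
        = fst p * monomial (snd p) z * eval_terms L2 z"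
    by (induction L2) (simp_all add: eval_terms_def monomial_add algebra_simps)
  with Cons show ?case by (simp add: eval_terms_def algebra_simps)
qed (simp add: eval_terms_def)

lemma coord_poly_eq_eval_terms: "coord_poly P \<Longrightarrow> \<exists>L. P = eval_terms L"
proof (induction rule: coord_poly.induct)
  case (const c)
  show ?case by (rule exI[of _ "[(c, \<lambda>v. 0)]"]) (simp add: eval_terms_def monomial_def)
next
  case (coord v)
  have "monomial (\<lambda>w. if w = v then 1 else 0) z = z $ v" for z :: "real^'a"
    unfolding monomial_def by (simp add: if_distrib prod.delta cong: if_cong)
  then show ?case
    by (intro exI[of _ "[(1, \<lambda>w. if w = v then 1 else 0)]"]) (simp add: eval_terms_def fun_eq_iff)
next
  case (add f g)
  then obtain L1 L2 where "f = eval_terms L1" "g = eval_terms L2" by blast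
  then show ?case by (intro exI[of _ "L1 @ L2"]) (simp add: eval_terms_def fun_eq_iff)
next
  case (mult f g)
  then obtain L1 L2 where "f = eval_terms L1" "g = eval_terms L2" by blast
  then show ?case by (simp add: fun_eq_iff eval_terms_mult[symmetric]) blast
qed

section \<open>Bernstein certificates on the unit cube\<close>

lemma sum_choose_Bernstein:
  assumes "r \<le> k"
  shows "(\<Sum>a\<le>k. real (a choose r) * Bernstein k a y) = real (k choose r) * y ^ r"
proof -
  let ?f = "\<lambda>a. real (a choose r) * Bernstein k a y"
  have "(\<Sum>a\<le>k. ?f a) = (\<Sum>a\<in>{r..k}. ?f a)"
    by (rule sum.mono_neutral_right) (auto simp: binomial_eq_0)
  also have "\<dots> = (\<Sum>a\<in>{r..k}. real (k choose r) * y ^ r * Bernstein (k - r) (a - r) y)"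
  proof (rule sum.cong[OF refl])
    fix a assume a: "a \<in> {r..k}"
    then have "real (k choose a) * real (a choose r) = real (k choose r) * real ((k - r) choose (a - r))"
      using choose_mult[of r a k] by (metis atLeastAtMost_iff of_nat_mult)
    moreover have "y ^ a = y ^ (a - r) * y ^ r" "k - a = k - r - (a - r)"
      using a by (auto simp: power_add[symmetric])
    ultimately show "?f a = real (k choose r) * y ^ r * Bernstein (k - r) (a - r) y"
      by (simp add: Bernstein_def algebra_simps)
  qed
  also have "\<dots> = real (k choose r) * y ^ r * (\<Sum>b\<le>k - r. Bernstein (k - r) b y)"
  proof -
    have "{r..k} = {0 + r..(k - r) + r}" using assms by simp
    then show ?thesis
      by (simp only: sum.shift_bounds_cl_nat_ivl) (simp add: atLeast0AtMost sum_distrib_left[symmetric])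
  qed
  finally show ?thesis by simp
qed

definition bernstein_weight :: "nat \<Rightarrow> nat \<Rightarrow> nat \<Rightarrow> real" where
  "bernstein_weight k r a = real (a choose r) / real (k choose r)"

lemma power_eq_sum_Bernstein:
  "r \<le> k \<Longrightarrow> y ^ r = (\<Sum>a\<le>k. bernstein_weight k r a * Bernstein k a y)"
  using sum_choose_Bernstein[of r k y]
  by (simp add: bernstein_weight_def sum_divide_distrib[symmetric] field_simps)

lemma bernstein_weight_Suc:
  assumes "r < k"
  shows "bernstein_weight k (Suc r) a = bernstein_weight k r a * (real (a - r) / real (k - r))"
proof -
  have step: "real (n choose Suc r) = real (n choose r) * real (n - r) / real (Suc r)" for n
  proof -
    have "real (Suc r) * real (n choose Suc r) = real (n - r) * real (n choose r)"
      using binomial_absorption[of r n] binomial_absorb_comp[of n r] by (metis of_nat_mult)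
    then show ?thesis by (simp add: field_simps)
  qed
  have cancel: "A * B / S / (C * D / S) = A / C * (B / D)" if "S \<noteq> 0" "C \<noteq> 0" "D \<noteq> 0"
    for A B C D S :: real
    using that by (simp add: field_simps)
  show ?thesis
    unfolding bernstein_weight_def step by (rule cancel) (use assms in auto)
qed

lemma bernstein_weight_bounds:
  "a \<le> k \<Longrightarrow> 0 \<le> bernstein_weight k r a \<and> bernstein_weight k r a \<le> 1"
  using le_less_linear[of r k]
  by (auto simp: bernstein_weight_def binomial_right_mono binomial_eq_0 divide_le_eq_1)

lemma Bernstein_ratio_error:
  fixes r a k :: nat
  assumes "r \<le> a" "a \<le> k" "r < k"
  shows "\<bar>real (a - r) / real (k - r) - real a / real k\<bar> \<le> real r / real k"
proof -
  have kr: "real k - real r > 0" using assms by simp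
  have "real (a - r) / real (k - r) - real a / real k = - (real r * (real k - real a)) / ((real k - real r) * real k)"
    using assms kr by (simp add: of_nat_diff field_simps)
  also have "\<bar>\<dots>\<bar> = real r * (real k - real a) / ((real k - real r) * real k)"
    using assms kr by (simp add: abs_div abs_mult)
  also have "\<dots> \<le> real r * (real k - real r) / ((real k - real r) * real k)"
    using assms kr by (intro divide_right_mono mult_left_mono) auto
  also have "\<dots> = real r / real k" using kr by simp
  finally show ?thesis .
qed

lemma bernstein_weight_approx:
  assumes "0 < k" "r \<le> k" "a \<le> k"
  shows "\<bar>bernstein_weight k r a - (real a / real k) ^ r\<bar> \<le> real r ^ 2 / real k"
  using assms(2)
proof (induction r)
  case (Suc r)
  let ?A = "real a / real k"
  have A: "0 \<le> ?A" "?A \<le> 1" "0 \<le> ?A ^ r" "?A ^ r \<le> 1" using assms by (auto simp: power_le_one)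
  show ?case
  proof (cases "r < a")
    case True
    define f where "f = real (a - r) / real (k - r)"
    have f: "0 \<le> f" "f \<le> 1" and fA: "\<bar>f - ?A\<bar> \<le> real r / real k"
      using Suc.prems assms True Bernstein_ratio_error[of r a k] by (auto simp: f_def)
    have "bernstein_weight k (Suc r) a - ?A ^ Suc r
          = (bernstein_weight k r a - ?A ^ r) * f + ?A ^ r * (f - ?A)"
      using Suc.prems by (simp add: bernstein_weight_Suc f_def algebra_simps)
    also have "\<bar>\<dots>\<bar> \<le> \<bar>bernstein_weight k r a - ?A ^ r\<bar> * f + ?A ^ r * \<bar>f - ?A\<bar>"
      using f A by (simp add: abs_mult abs_triangle_ineq[THEN order_trans])
    also have "\<dots> \<le> real r ^ 2 / real k * 1 + 1 * (real r / real k)"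
      using Suc f A fA by (intro add_mono mult_mono) auto
    also have "\<dots> \<le> real (Suc r) ^ 2 / real k"
      using assms by (simp add: field_simps power2_eq_square)
    finally show ?thesis .
  next
    case False
    then have "bernstein_weight k (Suc r) a = 0" by (simp add: bernstein_weight_def)
    moreover have "?A ^ Suc r \<le> real (Suc r) ^ 2 / real k"
    proof -
      have "?A ^ Suc r = ?A * ?A ^ r" by simp
      also have "\<dots> \<le> ?A" by (rule mult_left_le) (use A in auto)
      also have "\<dots> \<le> real (Suc r) ^ 2 / real k"
      proof (intro divide_right_mono)
        have "a \<le> Suc r ^ 2" using False by (simp add: power2_eq_square)
        then show "real a \<le> real (Suc r) ^ 2" by (metis of_nat_le_iff of_nat_power)
      qed simp
      finally show ?thesis .
    qed
    ultimately show ?thesis using A by simp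
  qed
qed (simp add: bernstein_weight_def)

lemma abs_prod_diff_le_sum_abs:
  fixes x y :: "'a \<Rightarrow> real"
  assumes "\<And>v. v \<in> S \<Longrightarrow> 0 \<le> x v \<and> x v \<le> 1 \<and> 0 \<le> y v \<and> y v \<le> 1"
  shows "\<bar>(\<Prod>v\<in>S. x v) - (\<Prod>v\<in>S. y v)\<bar> \<le> (\<Sum>v\<in>S. \<bar>x v - y v\<bar>)"
  using assms
proof (induction S rule: infinite_finite_induct)
  case (insert a S)
  let ?X = "\<Prod>v\<in>S. x v" and ?Y = "\<Prod>v\<in>S. y v"
  have X: "0 \<le> ?X" "?X \<le> 1" and ya: "0 \<le> y a" "y a \<le> 1"
    using insert.prems by (auto intro: prod_nonneg prod_le_1)
  have "x a * ?X - y a * ?Y = (x a - y a) * ?X + y a * (?X - ?Y)" by (simp add: algebra_simps)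
  then have "\<bar>x a * ?X - y a * ?Y\<bar> \<le> \<bar>x a - y a\<bar> * ?X + y a * \<bar>?X - ?Y\<bar>"
    using X ya by (simp add: abs_mult abs_triangle_ineq[THEN order_trans])
  also have "\<dots> \<le> \<bar>x a - y a\<bar> * 1 + 1 * \<bar>?X - ?Y\<bar>"
    by (intro add_mono mult_mono) (use X ya in auto)
  finally show ?case using insert by simp
qed simp_all

lemma monomial_eq_sum_Bernstein:
  assumes "\<And>v. r v \<le> k"
  shows "monomial r z = (\<Sum>a\<in>PiE UNIV (\<lambda>_. {..k}).
           (\<Prod>v\<in>UNIV. bernstein_weight k (r v) (a v)) * (\<Prod>v\<in>UNIV. Bernstein k (a v) (z $ v)))"
proof -
  have "monomial r z = (\<Prod>v\<in>UNIV. \<Sum>a\<le>k. bernstein_weight k (r v) a * Bernstein k a (z $ v))"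
    unfolding monomial_def using power_eq_sum_Bernstein assms by (intro prod.cong refl) blast
  also have "\<dots> = (\<Sum>a\<in>PiE UNIV (\<lambda>_. {..k}). \<Prod>v\<in>UNIV. bernstein_weight k (r v) (a v) * Bernstein k (a v) (z $ v))"
    by (rule prod_sum_PiE) auto
  finally show ?thesis by (simp add: prod.distrib)
qed

definition bernstein_coeff :: "(real \<times> ('v::finite \<Rightarrow> nat)) list \<Rightarrow> nat \<Rightarrow> ('v \<Rightarrow> nat) \<Rightarrow> real" where
  "bernstein_coeff L k a = (\<Sum>p\<leftarrow>L. fst p * (\<Prod>v\<in>UNIV. bernstein_weight k (snd p v) (a v)))"

lemma sum_list_sum_swap: "(\<Sum>x\<leftarrow>xs. \<Sum>a\<in>A. f x a) = (\<Sum>a\<in>A. \<Sum>x\<leftarrow>xs. f x a)"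
  by (induction xs) (simp_all add: sum.distrib)

lemma eval_terms_eq_sum_Bernstein:
  assumes "\<And>p v. p \<in> set L \<Longrightarrow> snd p v \<le> k"
  shows "eval_terms L z = (\<Sum>a\<in>PiE UNIV (\<lambda>_. {..k}).
           bernstein_coeff L k a * (\<Prod>v\<in>UNIV. Bernstein k (a v) (z $ v)))"
proof -
  have "eval_terms L z = (\<Sum>p\<leftarrow>L. \<Sum>a\<in>PiE UNIV (\<lambda>_. {..k}). fst p *
          (\<Prod>v\<in>UNIV. bernstein_weight k (snd p v) (a v)) * (\<Prod>v\<in>UNIV. Bernstein k (a v) (z $ v)))"
    unfolding eval_terms_def
  proof (intro arg_cong[where f=sum_list] map_cong refl)
    fix p assume "p \<in> set L"
    then show "fst p * monomial (snd p) z = (\<Sum>a\<in>PiE UNIV (\<lambda>_. {..k}). fst p *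
          (\<Prod>v\<in>UNIV. bernstein_weight k (snd p v) (a v)) * (\<Prod>v\<in>UNIV. Bernstein k (a v) (z $ v)))"
      using monomial_eq_sum_Bernstein[of "snd p" k z] assms by (simp add: sum_distrib_left mult.assoc)
  qed
  then show ?thesis
    by (simp add: sum_list_sum_swap bernstein_coeff_def sum_list_mult_const)
qed

lemma bernstein_coeff_approx:
  assumes "0 < k" "\<And>p v. p \<in> set L \<Longrightarrow> snd p v \<le> k" "\<And>v. a v \<le> k"
  shows "\<bar>bernstein_coeff L k a - eval_terms L (\<chi> v. real (a v) / real k)\<bar>
           \<le> (\<Sum>p\<leftarrow>L. \<bar>fst p\<bar> * (\<Sum>v\<in>UNIV. real (snd p v) ^ 2)) / real k"
proof -
  let ?z = "\<chi> v. real (a v) / real k"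
  let ?W = "\<lambda>r. \<Prod>v\<in>UNIV. bernstein_weight k (r v) (a v)"
  have term_error: "\<bar>?W r - monomial r ?z\<bar> \<le> (\<Sum>v\<in>UNIV. real (r v) ^ 2) / real k"
    if "\<And>v. r v \<le> k" for r
  proof -
    have "\<bar>?W r - monomial r ?z\<bar> \<le> (\<Sum>v\<in>UNIV. \<bar>bernstein_weight k (r v) (a v) - (real (a v) / real k) ^ r v\<bar>)"
      unfolding monomial_def using assms bernstein_weight_bounds[of "a _" k]
      by (simp, intro abs_prod_diff_le_sum_abs) (auto simp: power_le_one)
    also have "\<dots> \<le> (\<Sum>v\<in>UNIV. real (r v) ^ 2 / real k)"
      by (intro sum_mono bernstein_weight_approx assms that)
    finally show ?thesis by (simp add: sum_divide_distrib)
  qed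
  have "\<bar>bernstein_coeff L k a - eval_terms L ?z\<bar> = \<bar>\<Sum>p\<leftarrow>L. fst p * (?W (snd p) - monomial (snd p) ?z)\<bar>"
    unfolding bernstein_coeff_def eval_terms_def by (simp add: sum_list_subtractf[symmetric] algebra_simps)
  also have "\<dots> \<le> (\<Sum>p\<leftarrow>L. \<bar>fst p\<bar> * \<bar>?W (snd p) - monomial (snd p) ?z\<bar>)"
    using sum_list_abs[of "map (\<lambda>p. fst p * (?W (snd p) - monomial (snd p) ?z)) L"]
    by (simp add: o_def abs_mult)
  also have "\<dots> \<le> (\<Sum>p\<leftarrow>L. \<bar>fst p\<bar> * (\<Sum>v\<in>UNIV. real (snd p v) ^ 2) / real k)"
  proof (intro sum_list_mono)
    fix p assume "p \<in> set L"
    then have "\<bar>fst p\<bar> * \<bar>?W (snd p) - monomial (snd p) ?z\<bar>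
        \<le> \<bar>fst p\<bar> * ((\<Sum>v\<in>UNIV. real (snd p v) ^ 2) / real k)"
      by (intro mult_left_mono term_error assms(2)) simp_all
    then show "\<bar>fst p\<bar> * \<bar>?W (snd p) - monomial (snd p) ?z\<bar>
        \<le> \<bar>fst p\<bar> * (\<Sum>v\<in>UNIV. real (snd p v) ^ 2) / real k" by simp
  qed
  also have "\<dots> = (\<Sum>p\<leftarrow>L. \<bar>fst p\<bar> * (\<Sum>v\<in>UNIV. real (snd p v) ^ 2)) / real k"
    by (induction L) (simp_all add: add_divide_distrib)
  finally show ?thesis .
qed

theorem Bernstein_positivstellensatz:
  fixes P :: "real^'v::finite \<Rightarrow> real"
  assumes "coord_poly P" "0 < \<mu>" "\<And>z. z \<in> cbox 0 1 \<Longrightarrow> \<mu> \<le> P z"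
  obtains k b where "\<And>a. a \<in> PiE UNIV (\<lambda>_. {..k}) \<Longrightarrow> 0 \<le> b a"
    "\<And>z. P z = (\<Sum>a\<in>PiE UNIV (\<lambda>_. {..k}). b a * (\<Prod>v\<in>UNIV. (z $ v) ^ a v * (1 - z $ v) ^ (k - a v)))"
proof -
  obtain L where L: "P = eval_terms L" using coord_poly_eq_eval_terms assms(1) by blast
  define C where "C = (\<Sum>p\<leftarrow>L. \<bar>fst p\<bar> * (\<Sum>v\<in>UNIV. real (snd p v) ^ 2))"
  define k where "k = max (\<Sum>p\<leftarrow>L. \<Sum>v\<in>UNIV. snd p v) (nat \<lceil>C / \<mu>\<rceil>) + 1"
  have "C / \<mu> < real k" unfolding k_def by linarith
  then have k: "0 < k" "C / real k < \<mu>" using assms(2) by (auto simp: k_def field_simps)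
  have deg: "snd p v \<le> k" if "p \<in> set L" for p v
  proof -
    have "snd p v \<le> (\<Sum>v\<in>UNIV. snd p v)" by (rule member_le_sum) auto
    also have "\<dots> \<le> (\<Sum>p\<leftarrow>L. \<Sum>v\<in>UNIV. snd p v)" using that by (induction L) auto
    finally show ?thesis by (simp add: k_def)
  qed
  define b where "b a = bernstein_coeff L k a * (\<Prod>v\<in>UNIV. real (k choose a v))" for a
  show ?thesis
  proof
    fix a :: "'v \<Rightarrow> nat" assume "a \<in> PiE UNIV (\<lambda>_. {..k})"
    then have a: "a v \<le> k" for v by auto
    have "\<mu> \<le> eval_terms L (\<chi> v. real (a v) / real k)"
      using assms(3) a k(1) unfolding L by (simp add: mem_box_cart)
    moreover have "\<bar>bernstein_coeff L k a - eval_terms L (\<chi> v. real (a v) / real k)\<bar> \<le> C / real k"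
      unfolding C_def by (rule bernstein_coeff_approx) (use k(1) deg a in auto)
    ultimately have "0 \<le> bernstein_coeff L k a" using k(2) by linarith
    then show "0 \<le> b a" by (simp add: b_def prod_nonneg)
  next
    fix z :: "real^'v"
    have "P z = (\<Sum>a\<in>PiE UNIV (\<lambda>_. {..k}). bernstein_coeff L k a * (\<Prod>v\<in>UNIV. Bernstein k (a v) (z $ v)))"
      unfolding L by (rule eval_terms_eq_sum_Bernstein) (rule deg)
    then show "P z = (\<Sum>a\<in>PiE UNIV (\<lambda>_. {..k}). b a * (\<Prod>v\<in>UNIV. (z $ v) ^ a v * (1 - z $ v) ^ (k - a v)))"
      by (simp add: b_def Bernstein_def prod.distrib mult.assoc)
  qed
qed

(* R has a positive minimum on the compact set where P <= 0, so a large multiple of R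
   compensates the negative part of P. *)
lemma compact_penalty_pos:
  fixes P R :: "'a::t2_space \<Rightarrow> real"
  assumes S: "compact S" and P: "continuous_on S P" and R: "continuous_on S R"
    and R_nonneg: "\<And>z. z \<in> S \<Longrightarrow> 0 \<le> R z"
    and P_pos: "\<And>z. z \<in> S \<Longrightarrow> R z = 0 \<Longrightarrow> 0 < P z"
  obtains c where "\<And>z. z \<in> S \<Longrightarrow> 0 < P z + c * R z"
proof (cases "{z \<in> S. P z \<le> 0} = {}")
  case True
  then show ?thesis using that[of 0] by force
next
  case False
  have "closed {z \<in> S. P z \<le> 0}"
    using P S by (intro continuous_on_closed_Collect_le compact_imp_closed continuous_on_const)
  from compact_Int_closed[OF S this] have "compact {z \<in> S. P z \<le> 0}"
    by (simp add: Int_absorb1 subset_iff)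
  then obtain z0 where z0: "z0 \<in> S" "P z0 \<le> 0" and z0_min: "\<And>z. z \<in> S \<Longrightarrow> P z \<le> 0 \<Longrightarrow> R z0 \<le> R z"
    using continuous_attains_inf[OF _ False continuous_on_subset[OF R]] by blast
  obtain zP where "zP \<in> S" and zP_min: "\<And>z. z \<in> S \<Longrightarrow> P zP \<le> P z"
    using continuous_attains_inf[OF S _ P] z0(1) by blast
  have "0 < R z0" using R_nonneg[OF z0(1)] P_pos[OF z0(1)] z0(2) by fastforce
  define c where "c = (1 - P zP) / R z0"
  have "P zP \<le> 0" using zP_min[OF z0(1)] z0(2) by simp
  then have c: "0 \<le> c" "c * R z0 = 1 - P zP"
    using \<open>0 < R z0\<close> by (simp_all add: c_def)
  have "0 < P z + c * R z" if z: "z \<in> S" for z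
  proof (cases "P z \<le> 0")
    case True
    have "c * R z0 \<le> c * R z" using z0_min[OF z True] c(1) by (rule mult_left_mono)
    then show ?thesis using zP_min[OF z] c(2) by linarith
  next
    case False
    then show ?thesis using c(1) R_nonneg[OF z] by (simp add: add_pos_nonneg)
  qed
  then show ?thesis using that by blast
qed

lemma compact_penalty_positive:
  fixes P R :: "'a::t2_space \<Rightarrow> real"
  assumes S: "compact S" and P: "continuous_on S P" and R: "continuous_on S R"
    and R_nonneg: "\<And>z. z \<in> S \<Longrightarrow> 0 \<le> R z"
    and P_pos: "\<And>z. z \<in> S \<Longrightarrow> R z = 0 \<Longrightarrow> 0 < P z"
  obtains c \<mu> where "0 < \<mu>" "\<And>z. z \<in> S \<Longrightarrow> \<mu> \<le> P z + c * R z"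
proof -
  obtain c where c: "\<And>z. z \<in> S \<Longrightarrow> 0 < P z + c * R z"
    using compact_penalty_pos[OF assms] by blast
  show ?thesis
  proof (cases "S = {}")
    case False
    obtain z1 where "z1 \<in> S" "\<And>z. z \<in> S \<Longrightarrow> P z1 + c * R z1 \<le> P z + c * R z"
      using continuous_attains_inf[OF S False continuous_on_add[OF P continuous_on_mult[OF continuous_on_const R]]]
      by blast
    then show ?thesis using that c by blast
  qed (use that[of 1] in simp)
qed

lemma penalized_Bernstein_certificate:
  fixes P R :: "real^'v::finite \<Rightarrow> real"
  assumes P: "coord_poly P" and R: "coord_poly R" and R_nonneg: "\<And>z. 0 \<le> R z"
    and P_pos: "\<And>z. z \<in> cbox 0 1 \<Longrightarrow> R z = 0 \<Longrightarrow> 0 < P z"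
  obtains c k b where "\<And>a. a \<in> PiE UNIV (\<lambda>_. {..k}) \<Longrightarrow> 0 \<le> b a"
    "\<And>z. P z + c * R z = (\<Sum>a\<in>PiE UNIV (\<lambda>_. {..k}). b a * (\<Prod>v\<in>UNIV. (z $ v) ^ a v * (1 - z $ v) ^ (k - a v)))"
proof -
  obtain c \<mu> where \<mu>: "0 < \<mu>" "\<And>z. z \<in> cbox 0 1 \<Longrightarrow> \<mu> \<le> P z + c * R z"
    by (rule compact_penalty_positive[of "cbox 0 1" P R])
       (use continuous_on_coord_poly[OF P] continuous_on_coord_poly[OF R] R_nonneg P_pos in auto)
  have "coord_poly (\<lambda>z. P z + c * R z)" by (intro coord_poly.intros P R)
  then show ?thesis
  proof (rule Bernstein_positivstellensatz[of "\<lambda>z. P z + c * R z" \<mu>])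
    fix k b
    assume "\<And>a. a \<in> PiE UNIV (\<lambda>_. {..k}) \<Longrightarrow> 0 \<le> b a"
      "\<And>z. P z + c * R z = (\<Sum>a\<in>PiE UNIV (\<lambda>_. {..k}). b a * (\<Prod>v\<in>UNIV. (z $ v) ^ a v * (1 - z $ v) ^ (k - a v)))"
    then show ?thesis by (rule that)
  qed (use \<mu> in auto)
qed

section \<open>The sparse Krivine-Stengle cones\<close>

lemma HK_memI:
  "finite S \<Longrightarrow> (\<And>s. s \<in> S \<Longrightarrow> ks_deg s \<le> k \<and> 0 \<le> c s) \<Longrightarrow> F = (\<lambda>y. \<Sum>s\<in>S. c s * ks_gen g s y)
    \<Longrightarrow> F \<in> HK g k"
  unfolding HK_def by blast

lemma HK_memE:
  assumes "F \<in> HK g k"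
  obtains S c where "finite S" "\<And>s. s \<in> S \<Longrightarrow> ks_deg s \<le> k \<and> 0 \<le> c s"
    "F = (\<lambda>y. \<Sum>s\<in>S. c s * ks_gen g s y)"
  using assms unfolding HK_def by blast

lemma HK_zero: "(\<lambda>y. 0) \<in> HK g k"
  by (rule HK_memI[of "{}"]) auto

lemma HK_single: "ks_deg s \<le> k \<Longrightarrow> 0 \<le> c \<Longrightarrow> (\<lambda>y. c * ks_gen g s y) \<in> HK g k"
  by (rule HK_memI[of "{s}" _ "\<lambda>_. c"]) auto

lemma HK_add:
  assumes "F \<in> HK g k" "G \<in> HK g k"
  shows "(\<lambda>y. F y + G y) \<in> HK g k"
proof -
  obtain S1 c1 where S1: "finite S1" "\<And>s. s \<in> S1 \<Longrightarrow> ks_deg s \<le> k \<and> 0 \<le> c1 s"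
    and F: "F = (\<lambda>y. \<Sum>s\<in>S1. c1 s * ks_gen g s y)"
    using HK_memE[OF assms(1)] by blast
  obtain S2 c2 where S2: "finite S2" "\<And>s. s \<in> S2 \<Longrightarrow> ks_deg s \<le> k \<and> 0 \<le> c2 s"
    and G: "G = (\<lambda>y. \<Sum>s\<in>S2. c2 s * ks_gen g s y)"
    using HK_memE[OF assms(2)] by blast
  define c where "c s = (if s \<in> S1 then c1 s else 0) + (if s \<in> S2 then c2 s else 0)" for s
  have restrict: "(\<Sum>s\<in>S1 \<union> S2. (if s \<in> T then d s else 0) * ks_gen g s y) = (\<Sum>s\<in>T. d s * ks_gen g s y)"
    if "T \<subseteq> S1 \<union> S2" for T d y
    using S1(1) S2(1) that by (intro sum.mono_neutral_cong_right) auto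
  show ?thesis
  proof (rule HK_memI[of "S1 \<union> S2" _ c])
    show "(\<lambda>y. F y + G y) = (\<lambda>y. \<Sum>s\<in>S1 \<union> S2. c s * ks_gen g s y)"
      unfolding F G c_def distrib_right sum.distrib by (simp add: restrict)
  qed (use S1 S2 in \<open>auto simp: c_def\<close>)
qed

lemma HK_sum:
  "(\<And>a. a \<in> A \<Longrightarrow> F a \<in> HK g k) \<Longrightarrow> (\<lambda>y. \<Sum>a\<in>A. F a y) \<in> HK g k"
  by (induction A rule: infinite_finite_induct) (auto intro: HK_zero HK_add)

lemma HK_cmult:
  assumes "0 \<le> c" "F \<in> HK g k"
  shows "(\<lambda>y. c * F y) \<in> HK g k"
proof -
  obtain S d where "finite S" "\<And>s. s \<in> S \<Longrightarrow> ks_deg s \<le> k \<and> 0 \<le> d s"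
    and F: "F = (\<lambda>y. \<Sum>s\<in>S. d s * ks_gen g s y)"
    using HK_memE[OF assms(2)] by blast
  then show ?thesis
    using assms(1) by (intro HK_memI[of S _ "\<lambda>s. c * d s"]) (auto simp: sum_distrib_left mult.assoc)
qed

lemma HK_mono: "k \<le> k' \<Longrightarrow> F \<in> HK g k \<Longrightarrow> F \<in> HK g k'"
  unfolding HK_def by fastforce

lemma ks_gen_nonneg:
  assumes "\<And>i. 0 \<le> g i x \<and> g i x \<le> 1" "\<And>j. -1 \<le> e $ j \<and> e $ j \<le> 1"
  shows "0 \<le> ks_gen g s (x, e)"
proof -
  obtain j \<alpha> a0 \<beta> b0 where s: "s = (j, \<alpha>, a0, \<beta>, b0)" by (cases s) auto
  have "0 \<le> 1/2 + e $ j / 2" "0 \<le> 1 - (1/2 + e $ j / 2)" using assms(2)[of j] by auto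
  then show ?thesis unfolding s ks_gen_def using assms(1)
    by (auto intro!: mult_nonneg_nonneg prod_nonneg)
qed

lemma HK_nonneg:
  assumes "F \<in> HK g k" "\<And>i. 0 \<le> g i x \<and> g i x \<le> 1" "\<And>j. -1 \<le> e $ j \<and> e $ j \<le> 1"
  shows "0 \<le> F (x, e)"
proof -
  obtain S c where "\<And>s. s \<in> S \<Longrightarrow> ks_deg s \<le> k \<and> 0 \<le> c s"
    and "F = (\<lambda>y. \<Sum>s\<in>S. c s * ks_gen g s y)"
    using HK_memE[OF assms(1)] by blast
  moreover have "0 \<le> ks_gen g s (x, e)" for s by (rule ks_gen_nonneg) (use assms in auto)
  ultimately show ?thesis by (auto intro!: sum_nonneg)
qed

lemma HK_err_coord: "(\<lambda>y. 1/2 + snd y $ j / 2) \<in> HK g 1"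
  using HK_single[of "(j, \<lambda>_. 0, 1, \<lambda>_. 0, 0)" 1 1 g] by (simp add: ks_deg_def ks_gen_def)

lemma HK_one_minus_err_coord: "(\<lambda>y. 1 - (1/2 + snd y $ j / 2)) \<in> HK g 1"
  using HK_single[of "(j, \<lambda>_. 0, 0, \<lambda>_. 0, 1)" 1 1 g] by (simp add: ks_deg_def ks_gen_def)

lemma HK_one_minus_g:
  "(\<lambda>y. 1 - g i (fst y)) \<in> (HK g 1 :: ((real^'n::finite) \<times> (real^'m::finite) \<Rightarrow> real) set)"
proof -
  let ?s = "(undefined :: 'm, \<lambda>_. 0, 0, \<lambda>i'. if i' = i then 1 else 0, 0)"
  have "ks_gen g ?s y = 1 - g i (fst y)" for y
    unfolding ks_gen_def by (simp add: if_distrib prod.delta cong: if_cong)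
  moreover have "ks_deg ?s = 1" by (simp add: ks_deg_def)
  ultimately show ?thesis using HK_single[of ?s 1 1 g] by simp
qed

definition ks_bump :: "'p \<Rightarrow> ('m, 'p) ks_index \<Rightarrow> ('m, 'p) ks_index" where
  "ks_bump i s = (case s of (j, \<alpha>, a0, \<beta>, b0) \<Rightarrow> (j, \<alpha>(i := Suc (\<alpha> i)), a0, \<beta>, b0))"

lemma ks_gen_bump: "ks_gen g (ks_bump i s) y = g i (fst y) * ks_gen g s y"
proof -
  obtain j \<alpha> a0 \<beta> b0 where s: "s = (j, \<alpha>, a0, \<beta>, b0)" by (cases s) auto
  let ?f = "\<lambda>\<alpha>' v. g v (fst y) ^ \<alpha>' v * (1 - g v (fst y)) ^ \<beta> v"
  have split: "(\<Prod>v\<in>UNIV. ?f \<alpha>' v) = ?f \<alpha>' i * (\<Prod>v\<in>UNIV - {i}. ?f \<alpha>' v)" for \<alpha>'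
    by (simp add: prod.remove)
  have "(\<Prod>v\<in>UNIV - {i}. ?f (\<alpha>(i := Suc (\<alpha> i))) v) = (\<Prod>v\<in>UNIV - {i}. ?f \<alpha> v)"
    by (intro prod.cong) auto
  then have "(\<Prod>v\<in>UNIV. ?f (\<alpha>(i := Suc (\<alpha> i))) v) = g i (fst y) * (\<Prod>v\<in>UNIV. ?f \<alpha> v)"
    by (simp add: split[of "\<alpha>(i := Suc (\<alpha> i))"] split[of \<alpha>] del: fun_upd_apply) (simp add: mult.assoc)
  then show ?thesis unfolding s ks_bump_def ks_gen_def by (simp add: mult.assoc)
qed

lemma ks_deg_bump: "ks_deg (ks_bump i s) = Suc (ks_deg s)"
proof -
  obtain j \<alpha> a0 \<beta> b0 where s: "s = (j, \<alpha>, a0, \<beta>, b0)" by (cases s) auto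
  have "(\<Sum>v\<in>UNIV - {i}. (\<alpha>(i := Suc (\<alpha> i))) v) = (\<Sum>v\<in>UNIV - {i}. \<alpha> v)"
    by (intro sum.cong) auto
  then have "(\<Sum>v\<in>UNIV. (\<alpha>(i := Suc (\<alpha> i))) v) = Suc (\<Sum>v\<in>UNIV. \<alpha> v)"
    by (simp add: sum.remove[of UNIV i] del: fun_upd_apply) simp
  then show ?thesis unfolding s ks_bump_def ks_deg_def by simp
qed

lemma HK_g_mult:
  assumes "F \<in> HK g k"
  shows "(\<lambda>y. g i (fst y) * F y) \<in> HK g (Suc k)"
proof -
  obtain S c where S: "finite S" "\<And>s. s \<in> S \<Longrightarrow> ks_deg s \<le> k \<and> 0 \<le> c s"
    and F: "F = (\<lambda>y. \<Sum>s\<in>S. c s * ks_gen g s y)"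
    using HK_memE[OF assms] by blast
  have "(\<lambda>y. \<Sum>s\<in>S. c s * ks_gen g (ks_bump i s) y) \<in> HK g (Suc k)"
    using S(2) by (intro HK_sum HK_single) (auto simp: ks_deg_bump)
  then show ?thesis unfolding F ks_gen_bump by (simp add: sum_distrib_left algebra_simps)
qed

lemma prod_UNIV_option:
  fixes f :: "'a::finite option \<Rightarrow> 'b::comm_monoid_mult"
  shows "(\<Prod>v\<in>UNIV. f v) = f None * (\<Prod>i\<in>UNIV. f (Some i))"
  by (simp add: UNIV_option_conv prod.reindex)

(* The point of the unit cube with coordinates g_i(x) and g_(p+j)(y) = (1 + e_j)/2, at which the
   Bernstein monomials z^a (1 - z)^(k - a) become the generators h^(j). *)
definition ks_point :: "('p::finite \<Rightarrow> real^'n::finite \<Rightarrow> real) \<Rightarrow> 'm::finite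
    \<Rightarrow> (real^'n) \<times> (real^'m) \<Rightarrow> real^('p option)" where
  "ks_point g j y = (\<chi> v. case v of Some i \<Rightarrow> g i (fst y) | None \<Rightarrow> 1/2 + snd y $ j / 2)"

lemma HK_Bernstein_sum:
  fixes g :: "'p::finite \<Rightarrow> real^'n::finite \<Rightarrow> real" and j :: "'m::finite"
  assumes "\<And>a. a \<in> PiE UNIV (\<lambda>_. {..k}) \<Longrightarrow> 0 \<le> b a"
  shows "(\<lambda>y. \<Sum>a\<in>PiE UNIV (\<lambda>_. {..k}). b a *
            (\<Prod>v\<in>UNIV. (ks_point g j y $ v) ^ a v * (1 - ks_point g j y $ v) ^ (k - a v)))
         \<in> HK g (2 * (CARD('p) + 1) * k)"
proof (intro HK_sum)
  fix a :: "'p option \<Rightarrow> nat" assume a: "a \<in> PiE UNIV (\<lambda>_. {..k})"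
  define s where "s = (j, \<lambda>i. a (Some i), a None, \<lambda>i. k - a (Some i), k - a None)"
  have "(\<Prod>v\<in>UNIV. (ks_point g j y $ v) ^ a v * (1 - ks_point g j y $ v) ^ (k - a v)) = ks_gen g s y" for y
    unfolding prod_UNIV_option s_def ks_gen_def ks_point_def by (simp add: algebra_simps)
  moreover have "ks_deg s \<le> 2 * (CARD('p) + 1) * k"
  proof -
    have "a v \<le> k" for v using a by auto
    then have "(\<Sum>i\<in>UNIV. a (Some i)) \<le> CARD('p) * k" "(\<Sum>i\<in>UNIV. k - a (Some i)) \<le> CARD('p) * k"
      using sum_mono[of UNIV "\<lambda>i. a (Some i)" "\<lambda>_. k"] sum_mono[of UNIV "\<lambda>i. k - a (Some i)" "\<lambda>_. k"]
      by auto
    then show ?thesis using \<open>a None \<le> k\<close> by (simp add: s_def ks_deg_def algebra_simps)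
  qed
  ultimately show "(\<lambda>y. b a * (\<Prod>v\<in>UNIV. (ks_point g j y $ v) ^ a v * (1 - ks_point g j y $ v) ^ (k - a v)))
      \<in> HK g (2 * (CARD('p) + 1) * k)"
    using HK_single assms[OF a] by simp
qed

theorem HK_positive_block:
  fixes g :: "'p::finite \<Rightarrow> real^'n::finite \<Rightarrow> real" and Q :: "real^'n \<Rightarrow> real \<Rightarrow> real"
    and j :: "'m::finite"
  assumes g: "\<And>i. coord_poly (g i)" and coords: "\<And>q. g (iq q) = (\<lambda>x. x $ q)"
    and Q: "coord_poly (\<lambda>w::real^('n option). Q (\<chi> q. w $ Some q) (w $ None))"
    and Q_pos: "\<And>x e. (\<forall>i. 0 \<le> g i x \<and> g i x \<le> 1) \<Longrightarrow> -1 \<le> e \<Longrightarrow> e \<le> 1 \<Longrightarrow> 0 < Q x e"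
  shows "\<exists>k. (\<lambda>y. Q (fst y) (snd y $ j)) \<in> (HK g k :: ((real^'n) \<times> (real^'m) \<Rightarrow> real) set)"
proof -
  define x_of where "x_of z = (\<chi> q. z $ Some (iq q))" for z :: "real^('p option)"
  define P where "P z = Q (x_of z) (2 * z $ None - 1)" for z
  \<comment> \<open>R vanishes exactly at the lifts of points of X, and the penalty c * R makes P positive on the whole cube.\<close>
  define R where "R z = (\<Sum>i\<in>UNIV. (z $ Some i - g i (x_of z)) ^ 2)" for z
  have x_of: "coord_poly (\<lambda>z. x_of z $ q)" for q
    by (simp add: x_of_def coord_poly.coord)
  have "coord_poly (\<lambda>z. Q (x_of z) (2 * z $ None - 1))"
    by (intro coord_poly_compose_pair[OF Q x_of] coord_poly_diff coord_poly.intros)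
  then have P: "coord_poly P" by (simp add: P_def[abs_def])
  have R: "coord_poly R" unfolding R_def
    by (intro coord_poly_sum coord_poly_power coord_poly_diff coord_poly.coord coord_poly_compose[OF g] x_of)
  have R_nonneg: "0 \<le> R z" for z unfolding R_def by (simp add: sum_nonneg)
  have P_pos: "0 < P z" if z: "z \<in> cbox 0 1" and "R z = 0" for z
  proof -
    have z_g: "z $ Some i = g i (x_of z)" for i
      using \<open>R z = 0\<close> unfolding R_def by (subst (asm) sum_nonneg_eq_0_iff) auto
    have z_box: "0 \<le> z $ v \<and> z $ v \<le> 1" for v using z by (simp add: mem_box_cart)
    have "0 \<le> g i (x_of z) \<and> g i (x_of z) \<le> 1" for i
      using z_box[of "Some i"] by (simp only: z_g)
    then show ?thesis unfolding P_def using z_box[of None] by (intro Q_pos) auto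
  qed
  obtain c k b where b: "\<And>a. a \<in> PiE UNIV (\<lambda>_. {..k}) \<Longrightarrow> 0 \<le> b a"
    and PR: "\<And>z. P z + c * R z = (\<Sum>a\<in>PiE UNIV (\<lambda>_. {..k}). b a * (\<Prod>v\<in>UNIV. (z $ v) ^ a v * (1 - z $ v) ^ (k - a v)))"
  proof (rule penalized_Bernstein_certificate[OF P R R_nonneg P_pos])
    fix c k b
    assume "\<And>a. a \<in> PiE UNIV (\<lambda>_. {..k}) \<Longrightarrow> 0 \<le> b a"
      "\<And>z. P z + c * R z = (\<Sum>a\<in>PiE UNIV (\<lambda>_. {..k}). b a * (\<Prod>v\<in>UNIV. (z $ v) ^ a v * (1 - z $ v) ^ (k - a v)))"
    then show ?thesis by (rule that)
  qed
  have "Q (fst y) (snd y $ j) = P (ks_point g j y) + c * R (ks_point g j y)" for y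
  proof -
    have "x_of (ks_point g j y) = fst y" by (simp add: x_of_def ks_point_def coords vec_eq_iff)
    then show ?thesis by (simp add: P_def R_def ks_point_def)
  qed
  then have "(\<lambda>y. Q (fst y) (snd y $ j)) = (\<lambda>y. \<Sum>a\<in>PiE UNIV (\<lambda>_. {..k}). b a *
            (\<Prod>v\<in>UNIV. (ks_point g j y $ v) ^ a v * (1 - ks_point g j y $ v) ^ (k - a v)))"
    by (simp only: PR)
  moreover have "(\<lambda>y. \<Sum>a\<in>PiE UNIV (\<lambda>_. {..k}). b a *
            (\<Prod>v\<in>UNIV. (ks_point g j y $ v) ^ a v * (1 - ks_point g j y $ v) ^ (k - a v)))
         \<in> (HK g (2 * (CARD('p) + 1) * k) :: ((real^'n) \<times> (real^'m) \<Rightarrow> real) set)"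
    by (rule HK_Bernstein_sum) (rule b)
  ultimately show ?thesis by auto
qed

section \<open>Certificates for the linear form\<close>

lemma HK_g_power_mult:
  "F \<in> HK g k \<Longrightarrow> (\<lambda>y. g i (fst y) ^ n * F y) \<in> HK g (k + n)"
  by (induction n) (auto simp: mult.assoc dest: HK_g_mult[of _ g _ i])

lemma HK_g_monomial_mult:
  "F \<in> HK g k \<Longrightarrow> (\<lambda>y. (\<Prod>q\<in>Q. g (\<iota> q) (fst y) ^ a q) * F y) \<in> HK g (k + (\<Sum>q\<in>Q. a q))"
proof (induction Q rule: infinite_finite_induct)
  case (insert q Q)
  then have "(\<lambda>y. g (\<iota> q) (fst y) ^ a q * ((\<Prod>q\<in>Q. g (\<iota> q) (fst y) ^ a q) * F y))
      \<in> HK g (k + (\<Sum>q\<in>Q. a q) + a q)"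
    by (intro HK_g_power_mult) simp
  with insert.hyps show ?case by (simp add: mult.assoc add.commute add.left_commute)
qed simp_all

lemma HK_one_minus_g_mult:
  assumes "(\<lambda>y. 1 - G y) \<in> (HK g k :: ((real^'n::finite) \<times> (real^'m::finite) \<Rightarrow> real) set)"
  shows "(\<lambda>y. 1 - g i (fst y) * G y) \<in> HK g (Suc k)"
proof -
  have "(\<lambda>y. (1 - g i (fst y)) + g i (fst y) * (1 - G y)) \<in> HK g (Suc k)"
    by (intro HK_add HK_g_mult assms HK_mono[OF _ HK_one_minus_g]) simp
  then show ?thesis by (simp add: algebra_simps)
qed

lemma HK_one_minus_g_monomial:
  "(\<lambda>y. 1 - (\<Prod>q\<in>Q. g (\<iota> q) (fst y) ^ a q))
     \<in> (HK g (\<Sum>q\<in>Q. a q) :: ((real^'n::finite) \<times> (real^'m::finite) \<Rightarrow> real) set)"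
proof (induction Q rule: infinite_finite_induct)
  case (insert q Q)
  have "(\<lambda>y. 1 - g (\<iota> q) (fst y) ^ n * (\<Prod>q\<in>Q. g (\<iota> q) (fst y) ^ a q))
      \<in> (HK g ((\<Sum>q\<in>Q. a q) + n) :: ((real^'n) \<times> (real^'m) \<Rightarrow> real) set)" for n
    by (induction n) (auto simp: insert.IH mult.assoc dest: HK_one_minus_g_mult[of _ g _ "\<iota> q"])
  with insert.hyps show ?case by (simp add: add.commute)
qed (simp_all add: HK_zero)

lemma HK_monomial_err_term:
  fixes g :: "'p::finite \<Rightarrow> real^'n::finite \<Rightarrow> real" and j :: "'m::finite"
  assumes coords: "\<And>q. g (\<iota> q) = (\<lambda>x. x $ q)" and deg: "(\<Sum>q\<in>UNIV. a q) \<le> d"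
  shows "(\<lambda>y. c * monomial a (fst y) * snd y $ j + \<bar>c\<bar>) \<in> HK g (d + 1)"
proof -
  \<comment> \<open>c x^a e + |c| = 2|c| x^a u + |c| (1 - x^a), with u = (1 + e)/2 or (1 - e)/2 by the sign of c\<close>
  define u :: "(real^'n) \<times> (real^'m) \<Rightarrow> real"
    where "u = (if 0 \<le> c then (\<lambda>y. 1/2 + snd y $ j / 2) else (\<lambda>y. 1 - (1/2 + snd y $ j / 2)))"
  have mon: "monomial a (fst y) = (\<Prod>q\<in>UNIV. g (\<iota> q) (fst y) ^ a q)" for y
    by (simp add: monomial_def coords)
  have "u \<in> HK g 1"
    unfolding u_def
    by (cases "0 \<le> c") (simp_all only: if_True if_False HK_err_coord HK_one_minus_err_coord)
  then have "(\<lambda>y. monomial a (fst y) * u y) \<in> HK g (1 + (\<Sum>q\<in>UNIV. a q))"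
    using HK_g_monomial_mult[of u g 1 \<iota> a UNIV] by (simp add: mon)
  then have "(\<lambda>y. monomial a (fst y) * u y) \<in> HK g (d + 1)"
    by (rule HK_mono[rotated]) (use deg in simp)
  moreover have "(\<lambda>y. 1 - monomial a (fst y)) \<in> (HK g (d + 1) :: ((real^'n) \<times> (real^'m) \<Rightarrow> real) set)"
    using HK_mono[of "\<Sum>q\<in>UNIV. a q" "d + 1", OF _ HK_one_minus_g_monomial[of g \<iota> a UNIV]] deg
    by (simp add: mon)
  ultimately have "(\<lambda>y. 2 * \<bar>c\<bar> * (monomial a (fst y) * u y) + \<bar>c\<bar> * (1 - monomial a (fst y))) \<in> HK g (d + 1)"
    by (intro HK_add HK_cmult) auto
  moreover have "2 * \<bar>c\<bar> * (monomial a (fst y) * u y) + \<bar>c\<bar> * (1 - monomial a (fst y))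
      = c * monomial a (fst y) * snd y $ j + \<bar>c\<bar>" for y
    by (cases "0 \<le> c") (simp_all add: u_def algebra_simps)
  ultimately show ?thesis by simp
qed

lemma HK_linear_form_minus_const:
  fixes g :: "'p::finite \<Rightarrow> real^'n::finite \<Rightarrow> real" and s :: "'m::finite \<Rightarrow> real^'n \<Rightarrow> real"
  assumes coords: "\<And>q. g (\<iota> q) = (\<lambda>x. x $ q)" and s: "\<And>j. poly_fun_deg d (s j)"
  shows "\<exists>t. (\<lambda>y. (\<Sum>j\<in>UNIV. s j (fst y) * snd y $ j) - t) \<in> HK g (d + 1)"
proof -
  obtain C where C: "\<And>j. finite {a. C j a \<noteq> 0}" "\<And>j a. C j a \<noteq> 0 \<Longrightarrow> (\<Sum>q\<in>UNIV. a q) \<le> d"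
    "\<And>j. s j = mpoly_eval (C j)"
    using s unfolding poly_fun_deg_def by metis
  have s_eq: "s j x = (\<Sum>a | C j a \<noteq> 0. C j a * monomial a x)" for j x
    by (simp add: C(3) mpoly_eval_def monomial_def)
  have "(\<lambda>y. \<Sum>j\<in>UNIV. \<Sum>a | C j a \<noteq> 0. C j a * monomial a (fst y) * snd y $ j + \<bar>C j a\<bar>) \<in> HK g (d + 1)"
    by (intro HK_sum HK_monomial_err_term[of g \<iota>, OF coords] C(2)) simp
  moreover have "(\<Sum>j\<in>UNIV. \<Sum>a | C j a \<noteq> 0. C j a * monomial a (fst y) * snd y $ j + \<bar>C j a\<bar>)
      = (\<Sum>j\<in>UNIV. s j (fst y) * snd y $ j) - (- (\<Sum>j\<in>UNIV. \<Sum>a | C j a \<noteq> 0. \<bar>C j a\<bar>))" for y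
    by (simp add: s_eq sum.distrib sum_distrib_right)
  ultimately show ?thesis by (intro exI) (simp only:)
qed

lemma coord_poly_majorant_abs:
  fixes s :: "real^'n::finite \<Rightarrow> real"
  assumes "coord_poly s" "compact X" "0 < \<eta>"
  obtains c where "coord_poly c" "\<And>x. x \<in> X \<Longrightarrow> \<bar>s x\<bar> + \<eta> \<le> c x \<and> c x \<le> \<bar>s x\<bar> + 3 * \<eta>"
proof -
  have "compact (s ` X)"
    using assms by (intro compact_continuous_image continuous_on_coord_poly)
  moreover have "continuous_on (s ` X) abs" by (intro continuous_intros)
  ultimately obtain h where h: "real_polynomial_function h" "\<And>u. u \<in> s ` X \<Longrightarrow> \<bar>\<bar>u\<bar> - h u\<bar> < \<eta>"
    by (rule Stone_Weierstrass_real_polynomial_function[OF _ _ assms(3)]) blast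
  show ?thesis
  proof (rule that[of "\<lambda>x. h (s x) + 2 * \<eta>"])
    show "coord_poly (\<lambda>x. h (s x) + 2 * \<eta>)"
      using coord_poly_compose_real_polynomial_function[OF h(1) assms(1)] by (intro coord_poly.intros)
  next
    fix x assume "x \<in> X"
    then have "\<bar>\<bar>s x\<bar> - h (s x)\<bar> < \<eta>" by (intro h(2)) simp
    then show "\<bar>s x\<bar> + \<eta> \<le> h (s x) + 2 * \<eta> \<and> h (s x) + 2 * \<eta> \<le> \<bar>s x\<bar> + 3 * \<eta>"
      unfolding abs_less_iff by linarith
  qed
qed

lemma HK_linear_block:
  fixes g :: "'p::finite \<Rightarrow> real^'n::finite \<Rightarrow> real" and j :: "'m::finite"
  assumes g: "\<And>i. coord_poly (g i)" and coords: "\<And>q. g (\<iota> q) = (\<lambda>x. x $ q)"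
    and s: "coord_poly s" and c: "coord_poly c"
    and dominated: "\<And>x. \<forall>i. 0 \<le> g i x \<and> g i x \<le> 1 \<Longrightarrow> \<bar>s x\<bar> < c x"
  shows "\<exists>k. (\<lambda>y. s (fst y) * snd y $ j + c (fst y)) \<in> (HK g k :: ((real^'n) \<times> (real^'m) \<Rightarrow> real) set)"
proof (rule HK_positive_block[of g \<iota>, OF g coords])
  have "coord_poly (\<lambda>w::real^('n option). f (\<chi> q. w $ Some q))" if "coord_poly f" for f
    using that by (rule coord_poly_compose) (simp add: coord_poly.coord)
  then show "coord_poly (\<lambda>w::real^('n option). s (\<chi> q. w $ Some q) * w $ None + c (\<chi> q. w $ Some q))"
    using s c by (intro coord_poly.add coord_poly.mult coord_poly.coord)
next
  fix x and e :: real
  assume "\<forall>i. 0 \<le> g i x \<and> g i x \<le> 1" "-1 \<le> e" "e \<le> 1"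
  then have "\<bar>s x * e\<bar> \<le> \<bar>s x\<bar>" "\<bar>s x\<bar> < c x"
    using mult_left_le[of "\<bar>e\<bar>" "\<bar>s x\<bar>"] dominated by (auto simp: abs_mult)
  then show "0 < s x * e + c x" by linarith
qed

lemma HK_sum_UNIV:
  assumes "\<And>j :: 'm::finite. \<exists>k. F j \<in> HK g k"
  shows "\<exists>k. (\<lambda>y. \<Sum>j\<in>UNIV. F j y) \<in> HK g k"
proof -
  obtain k where k: "\<And>j. F j \<in> HK g (k j)" using assms by metis
  have "F j \<in> HK g (\<Sum>j\<in>UNIV. k j)" for j
    using k[of j] by (rule HK_mono[rotated]) (simp add: member_le_sum)
  then show ?thesis by (blast intro: HK_sum)
qed

lemma HK_linear_form_plus_const:
  fixes g :: "'p::finite \<Rightarrow> real^'n::finite \<Rightarrow> real" and s :: "'m::finite \<Rightarrow> real^'n \<Rightarrow> real"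
  assumes g: "\<And>i. coord_poly (g i)" and coords: "\<And>q. g (\<iota> q) = (\<lambda>x. x $ q)"
    and s: "\<And>j. coord_poly (s j)" and X: "X = {x. \<forall>i. 0 \<le> g i x \<and> g i x \<le> 1}" "compact X"
    and bound: "\<And>x. x \<in> X \<Longrightarrow> (\<Sum>j\<in>UNIV. \<bar>s j x\<bar>) \<le> B" and "0 < \<delta>"
  shows "\<exists>k. (\<lambda>y. (\<Sum>j\<in>UNIV. s j (fst y) * snd y $ j) + (B + \<delta>))
               \<in> (HK g k :: ((real^'n) \<times> (real^'m) \<Rightarrow> real) set)"
proof -
  define m where "m = real CARD('m)"
  define \<eta> where "\<eta> = \<delta> / (3 * m)"
  have "0 < m" "0 < \<eta>" using \<open>0 < \<delta>\<close> by (simp_all add: m_def \<eta>_def)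
  have "\<forall>j. \<exists>c. coord_poly c \<and> (\<forall>x\<in>X. \<bar>s j x\<bar> + \<eta> \<le> c x \<and> c x \<le> \<bar>s j x\<bar> + 3 * \<eta>)"
    using coord_poly_majorant_abs[OF s X(2) \<open>0 < \<eta>\<close>] by (metis (no_types))
  then obtain c where c: "\<And>j. coord_poly (c j)"
    "\<And>j x. x \<in> X \<Longrightarrow> \<bar>s j x\<bar> + \<eta> \<le> c j x \<and> c j x \<le> \<bar>s j x\<bar> + 3 * \<eta>"
    by metis
  \<comment> \<open>the slack left by the majorants c j is shared equally among the blocks\<close>
  define r where "r x = (B + \<delta> - (\<Sum>j\<in>UNIV. c j x)) / m" for x
  have "coord_poly r"
    unfolding r_def[abs_def] divide_inverse by (intro coord_poly.intros coord_poly_diff coord_poly_sum c(1))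
  have r_nonneg: "0 \<le> r x" if "x \<in> X" for x
  proof -
    have "(\<Sum>j\<in>UNIV. c j x) \<le> (\<Sum>j\<in>UNIV. \<bar>s j x\<bar> + 3 * \<eta>)"
      using c(2)[OF that] by (intro sum_mono) blast
    also have "\<dots> = (\<Sum>j\<in>UNIV. \<bar>s j x\<bar>) + m * (3 * \<eta>)"
      by (simp add: sum.distrib m_def)
    also have "m * (3 * \<eta>) = \<delta>" using \<open>0 < m\<close> by (simp add: \<eta>_def)
    finally show ?thesis using bound[OF that] \<open>0 < m\<close> by (simp add: r_def)
  qed
  have blocks: "\<exists>k. (\<lambda>y. s j (fst y) * snd y $ j + (c j (fst y) + r (fst y)))
      \<in> (HK g k :: ((real^'n) \<times> (real^'m) \<Rightarrow> real) set)" for j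
  proof (rule HK_linear_block[of g \<iota>, OF g coords s])
    show "coord_poly (\<lambda>x. c j x + r x)" by (intro coord_poly.add c(1) \<open>coord_poly r\<close>)
    fix x assume "\<forall>i. 0 \<le> g i x \<and> g i x \<le> 1"
    then have "x \<in> X" by (simp add: X)
    then show "\<bar>s j x\<bar> < c j x + r x" using c(2)[of x j] r_nonneg \<open>0 < \<eta>\<close> by fastforce
  qed
  obtain k where "(\<lambda>y. \<Sum>j\<in>UNIV. s j (fst y) * snd y $ j + (c j (fst y) + r (fst y)))
      \<in> (HK g k :: ((real^'n) \<times> (real^'m) \<Rightarrow> real) set)"
    using HK_sum_UNIV[of "\<lambda>j y. s j (fst y) * snd y $ j + (c j (fst y) + r (fst y))", OF blocks]
    by blast
  moreover have "(\<Sum>j\<in>UNIV. s j x * e $ j + (c j x + r x)) = (\<Sum>j\<in>UNIV. s j x * e $ j) + (B + \<delta>)"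
    for x and e :: "real^'m"
  proof -
    have "(\<Sum>j::'m\<in>UNIV. r x) = B + \<delta> - (\<Sum>j\<in>UNIV. c j x)"
      using \<open>0 < m\<close> by (simp add: r_def m_def)
    then show ?thesis by (simp add: sum.distrib)
  qed
  ultimately show ?thesis by auto
qed

section \<open>Convergence of the bounds\<close>

lemma compact_preimage_unit_interval:
  fixes g :: "'p \<Rightarrow> real^'n::finite \<Rightarrow> real"
  assumes "\<And>i. continuous_on UNIV (g i)" and "\<And>q. \<exists>i. g i = (\<lambda>x. x $ q)"
  shows "compact {x. \<forall>i. 0 \<le> g i x \<and> g i x \<le> 1}"
proof -
  let ?X = "{x. \<forall>i. 0 \<le> g i x \<and> g i x \<le> 1}"
  have "closed ?X"
    by (intro closed_Collect_all closed_Collect_conj closed_Collect_le continuous_on_const assms(1))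
  then have "compact (cbox (0 :: real^'n) 1 \<inter> ?X)" by (rule compact_Int_closed[OF compact_cbox])
  moreover have "?X \<subseteq> cbox 0 1"
  proof
    fix x assume x: "x \<in> ?X"
    have "0 \<le> x $ q \<and> x $ q \<le> 1" for q
    proof -
      obtain i where "g i = (\<lambda>x. x $ q)" using assms(2) by blast
      moreover have "0 \<le> g i x \<and> g i x \<le> 1" using x by simp
      ultimately show ?thesis by simp
    qed
    then show "x \<in> cbox 0 1" by (simp add: mem_box_cart)
  qed
  ultimately show ?thesis by (simp add: Int_absorb1)
qed

lemma tendsto_Sup_increasing_sets:
  fixes T :: "nat \<Rightarrow> real set"
  assumes mono: "\<And>k k'. k \<le> k' \<Longrightarrow> T k \<subseteq> T k'" and bound: "\<And>k t. t \<in> T k \<Longrightarrow> t \<le> I"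
    and approx: "\<And>\<delta>. 0 < \<delta> \<Longrightarrow> \<exists>k. I - \<delta> \<in> T k"
  shows "(\<lambda>k. Sup (T k)) \<longlonglongrightarrow> I"
proof (rule LIMSEQ_I)
  fix r :: real assume "0 < r"
  then obtain k0 where k0: "I - r / 2 \<in> T k0" using approx[of "r / 2"] by auto
  have "norm (Sup (T k) - I) < r" if "k0 \<le> k" for k
  proof -
    have "I - r / 2 \<in> T k" using mono[OF that] k0 by blast
    moreover have "bdd_above (T k)" using bound by (rule bdd_aboveI)
    ultimately have "I - r / 2 \<le> Sup (T k)" "Sup (T k) \<le> I"
      using bound by (auto intro: cSup_upper cSup_least)
    then show ?thesis using \<open>0 < r\<close> by simp
  qed
  then show "\<exists>k0. \<forall>k\<ge>k0. norm (Sup (T k) - I) < r" by blast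
qed

lemma poly_fun_deg_uminus:
  assumes "poly_fun_deg d f"
  shows "poly_fun_deg d (\<lambda>x. - f x)"
proof -
  obtain c where c: "finite {a. c a \<noteq> 0}" "\<forall>a. c a \<noteq> 0 \<longrightarrow> (\<Sum>i\<in>UNIV. a i) \<le> d"
    "f = mpoly_eval c"
    using assms unfolding poly_fun_deg_def by blast
  have "(\<lambda>x. - f x) = mpoly_eval (\<lambda>a. - c a)"
    unfolding c(3) mpoly_eval_def by (simp add: sum_negf fun_eq_iff)
  then show ?thesis unfolding poly_fun_deg_def using c(1,2) by (intro exI[of _ "\<lambda>a. - c a"]) auto
qed

lemma compact_linear_form_image:
  fixes g :: "'p::finite \<Rightarrow> real^'n::finite \<Rightarrow> real" and s :: "'m::finite \<Rightarrow> real^'n \<Rightarrow> real"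
  assumes g: "\<And>i. coord_poly (g i)" and coords: "\<And>q. \<exists>i. g i = (\<lambda>x. x $ q)"
    and X_def: "X = {x. \<forall>i. 0 \<le> g i x \<and> g i x \<le> 1}" and "X \<noteq> {}"
    and s: "\<And>j. coord_poly (s j)"
    and l'_def: "l' = (\<lambda>(x, e). \<Sum>j\<in>UNIV. s j x * e $ j)"
    and K_def: "K = {(x, e). x \<in> X \<and> (\<forall>j. -1 \<le> e $ j \<and> e $ j \<le> 1)}"
  shows "compact (l' ` K)" "l' ` K \<noteq> {}"
proof -
  have "compact X"
    unfolding X_def using g coords by (intro compact_preimage_unit_interval continuous_on_coord_poly)
  moreover have "K = X \<times> cbox (-1) 1" by (auto simp: K_def mem_box_cart)
  ultimately have "compact K" by (simp add: compact_Times)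
  moreover have "continuous_on K l'"
  proof -
    have "continuous_on UNIV (\<lambda>y::(real^'n) \<times> (real^'m). s j (fst y))" for j
      by (rule continuous_on_compose2[OF continuous_on_coord_poly[OF s] continuous_on_fst]) auto
    then have "continuous_on UNIV (\<lambda>y. \<Sum>j\<in>UNIV. s j (fst y) * snd y $ j)"
      by (intro continuous_on_sum continuous_on_mult continuous_on_component continuous_on_snd
          continuous_on_id)
    moreover have "l' = (\<lambda>y. \<Sum>j\<in>UNIV. s j (fst y) * snd y $ j)"
      by (simp add: l'_def split_beta fun_eq_iff)
    ultimately show ?thesis using continuous_on_subset by blast
  qed
  ultimately show "compact (l' ` K)" by (rule compact_continuous_image[rotated])
  obtain x where "x \<in> X" using \<open>X \<noteq> {}\<close> by blast
  then have "(x, 0) \<in> K" by (simp add: K_def)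
  then show "l' ` K \<noteq> {}" by blast
qed

lemma HK_shift_le_Inf:
  assumes "(\<lambda>y. f y - t) \<in> HK g k" "K \<noteq> {}"
    and "\<And>x e. (x, e) \<in> K \<Longrightarrow> (\<forall>i. 0 \<le> g i x \<and> g i x \<le> 1) \<and> (\<forall>j. -1 \<le> e $ j \<and> e $ j \<le> 1)"
  shows "t \<le> Inf (f ` K)"
proof (rule cInf_greatest)
  fix v assume "v \<in> f ` K"
  then obtain x e where "(x, e) \<in> K" "v = f (x, e)" by auto
  moreover have "0 \<le> f (x, e) - t"
    using HK_nonneg[OF assms(1), of x e] assms(3)[OF \<open>(x, e) \<in> K\<close>] by auto
  ultimately show "t \<le> v" by simp
qed (use assms(2) in blast)

lemma sum_abs_le_uminus_Inf:
  fixes s :: "'m::finite \<Rightarrow> 'a \<Rightarrow> real"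
  assumes "x \<in> X" "bdd_below (l' ` K)"
    and l'_def: "l' = (\<lambda>(x, e). \<Sum>j\<in>UNIV. s j x * e $ j)"
    and K_def: "K = {(x, e). x \<in> X \<and> (\<forall>j. -1 \<le> e $ j \<and> e $ j \<le> 1)}"
  shows "(\<Sum>j\<in>UNIV. \<bar>s j x\<bar>) \<le> - Inf (l' ` K)"
proof -
  define e :: "real^'m" where "e = (\<chi> j. if 0 \<le> s j x then -1 else 1)"
  have "(x, e) \<in> K" using assms(1) by (simp add: K_def e_def)
  then have "Inf (l' ` K) \<le> l' (x, e)" using assms(2) by (simp add: cInf_lower)
  also have "l' (x, e) = - (\<Sum>j\<in>UNIV. \<bar>s j x\<bar>)"
    unfolding l'_def sum_negf[symmetric] by (auto simp: e_def intro!: sum.cong)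
  finally show ?thesis by simp
qed

lemma HK_lower_bounds:
  fixes g :: "'p::finite \<Rightarrow> real^'n::finite \<Rightarrow> real" and s :: "'m::finite \<Rightarrow> real^'n \<Rightarrow> real"
  assumes g_poly: "\<And>i. poly_fun (g i)" and coords: "\<And>q. \<exists>i. g i = (\<lambda>x. x $ q)"
    and X_def: "X = {x. \<forall>i. 0 \<le> g i x \<and> g i x \<le> 1}" and X_ne: "X \<noteq> {}"
    and s_poly: "\<And>j. poly_fun_deg d (s j)"
    and l'_def: "l' = (\<lambda>(x, e). \<Sum>j\<in>UNIV. s j x * e $ j)"
    and K_def: "K = {(x, e). x \<in> X \<and> (\<forall>j. -1 \<le> e $ j \<and> e $ j \<le> 1)}"
  shows "\<forall>k\<ge>d+1. Sup {t. (\<lambda>y. l' y - t) \<in> HK g k} \<le> Sup {t. (\<lambda>y. l' y - t) \<in> HK g (Suc k)}"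
    and "(\<lambda>k. Sup {t. (\<lambda>y. l' y - t) \<in> HK g k}) \<longlonglongrightarrow> Inf (l' ` K)"
proof -
  obtain \<iota> where \<iota>: "\<And>q. g (\<iota> q) = (\<lambda>x. x $ q)" using coords by metis
  have g: "coord_poly (g i)" for i using g_poly by (rule poly_fun_imp_coord_poly)
  have s: "coord_poly (s j)" for j using s_poly by (rule poly_fun_deg_imp_coord_poly)
  have l': "l' y = (\<Sum>j\<in>UNIV. s j (fst y) * snd y $ j)" for y by (simp add: l'_def split_beta)
  have compact: "compact (l' ` K)" "l' ` K \<noteq> {}"
    using compact_linear_form_image[OF g coords X_def X_ne s l'_def K_def] by auto
  define I where "I = Inf (l' ` K)"
  define T where "T k = {t. (\<lambda>y. l' y - t) \<in> HK g k}" for k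
  have T_mono: "T k \<subseteq> T k'" if "k \<le> k'" for k k'
    using HK_mono[OF that] by (auto simp: T_def)
  have T_le: "t \<le> I" if "t \<in> T k" for t k
    unfolding I_def using that compact(2)
    by (intro HK_shift_le_Inf[of l' t g k]) (auto simp: T_def K_def X_def)
  have "T (d + 1) \<noteq> {}"
    using HK_linear_form_minus_const[of g \<iota>, OF \<iota> s_poly] by (auto simp: T_def l')
  show "\<forall>k\<ge>d+1. Sup (T k) \<le> Sup (T (Suc k))" unfolding T_def[symmetric]
  proof (intro allI impI cSup_subset_mono)
    fix k assume "d + 1 \<le> k"
    show "T k \<noteq> {}" using \<open>T (d + 1) \<noteq> {}\<close> T_mono[OF \<open>d + 1 \<le> k\<close>] by blast
    show "bdd_above (T (Suc k))" using T_le by (rule bdd_aboveI)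
    show "T k \<subseteq> T (Suc k)" by (rule T_mono) simp
  qed
  have bound: "(\<Sum>j\<in>UNIV. \<bar>s j x\<bar>) \<le> - I" if "x \<in> X" for x
    unfolding I_def using that compact(1) l'_def K_def
    by (intro sum_abs_le_uminus_Inf) (auto intro: bounded_imp_bdd_below compact_imp_bounded)
  have "compact X"
    unfolding X_def using g coords by (intro compact_preimage_unit_interval continuous_on_coord_poly)
  have "\<exists>k. I - \<delta> \<in> T k" if \<delta>: "0 < \<delta>" for \<delta>
  proof -
    obtain k where "(\<lambda>y. (\<Sum>j\<in>UNIV. s j (fst y) * snd y $ j) + (- I + \<delta>)) \<in> HK g k"
      using HK_linear_form_plus_const[of g \<iota>, OF g \<iota> s X_def \<open>compact X\<close> bound \<delta>] by blast
    moreover have "(\<lambda>y. (\<Sum>j\<in>UNIV. s j (fst y) * snd y $ j) + (- I + \<delta>)) = (\<lambda>y. l' y - (I - \<delta>))"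
      by (simp add: l' fun_eq_iff)
    ultimately show ?thesis unfolding T_def by auto
  qed
  then show "(\<lambda>k. Sup (T k)) \<longlonglongrightarrow> Inf (l' ` K)"
    unfolding I_def[symmetric] using T_mono T_le by (intro tendsto_Sup_increasing_sets)
qed

lemma Inf_shift_eq_uminus_Sup:
  "Inf {t. (\<lambda>y. t - f y) \<in> H} = - Sup {t :: real. (\<lambda>y. - f y - t) \<in> H}"
proof -
  have "{t. (\<lambda>y. - f y - t) \<in> H} = uminus ` {t. (\<lambda>y. t - f y) \<in> H}"
  proof (intro equalityI subsetI)
    fix t assume "t \<in> {t. (\<lambda>y. - f y - t) \<in> H}"
    moreover have "(\<lambda>y. - t - f y) = (\<lambda>y. - f y - t)" by (simp add: fun_eq_iff)
    ultimately show "t \<in> uminus ` {t. (\<lambda>y. t - f y) \<in> H}"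
      by (intro image_eqI[of _ _ "- t"]) simp_all
  next
    fix t assume "t \<in> uminus ` {t. (\<lambda>y. t - f y) \<in> H}"
    then obtain u where "t = - u" "(\<lambda>y. u - f y) \<in> H" by blast
    moreover have "(\<lambda>y. - f y - (- u)) = (\<lambda>y. u - f y)" by (simp add: fun_eq_iff)
    ultimately show "t \<in> {t. (\<lambda>y. - f y - t) \<in> H}" by simp
  qed
  then show ?thesis by (simp add: Inf_real_def)
qed

lemma cInf_cmult_image:
  fixes A :: "real set"
  assumes "0 < c" "A \<noteq> {}" "bdd_below A"
  shows "Inf ((\<lambda>v. c * v) ` A) = c * Inf A"
  using continuous_at_Inf_mono[of "\<lambda>v. c * v" A] assms
  by (simp add: mono_def continuous_intros)

lemma cSup_cmult_image:
  fixes A :: "real set"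
  assumes "0 < c" "A \<noteq> {}" "bdd_above A"
  shows "Sup ((\<lambda>v. c * v) ` A) = c * Sup A"
  using continuous_at_Sup_mono[of "\<lambda>v. c * v" A] assms
  by (simp add: mono_def continuous_intros)

lemma image_linear_form_scaled_box:
  fixes s :: "'m::finite \<Rightarrow> 'a \<Rightarrow> real"
  assumes "0 < \<epsilon>"
  shows "(\<lambda>(x, e). \<Sum>j\<in>UNIV. s j x * e $ j) ` {(x, e). x \<in> X \<and> (\<forall>j. -\<epsilon> \<le> e $ j \<and> e $ j \<le> \<epsilon>)}
    = (\<lambda>v. \<epsilon> * v) ` ((\<lambda>(x, e). \<Sum>j\<in>UNIV. s j x * e $ j) ` {(x, e). x \<in> X \<and> (\<forall>j. -1 \<le> e $ j \<and> e $ j \<le> 1)})"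
proof -
  let ?B = "\<lambda>r. {(x, e :: real^'m). x \<in> X \<and> (\<forall>j. -r \<le> e $ j \<and> e $ j \<le> r)}"
  have "?B \<epsilon> = (\<lambda>(x, e). (x, \<epsilon> *\<^sub>R e)) ` ?B 1"
  proof (intro equalityI subsetI)
    fix y assume "y \<in> ?B \<epsilon>"
    then obtain x e where "y = (x, e)" "x \<in> X" "\<And>j. -\<epsilon> \<le> e $ j \<and> e $ j \<le> \<epsilon>" by blast
    moreover have "-1 \<le> e $ j / \<epsilon> \<and> e $ j / \<epsilon> \<le> 1" for j
      using \<open>\<And>j. -\<epsilon> \<le> e $ j \<and> e $ j \<le> \<epsilon>\<close>[of j] assms by (simp add: field_simps)
    ultimately show "y \<in> (\<lambda>(x, e). (x, \<epsilon> *\<^sub>R e)) ` ?B 1"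
      using assms by (intro image_eqI[of _ _ "(x, (1 / \<epsilon>) *\<^sub>R e)"]) (auto simp: vec_eq_iff)
  next
    fix y assume "y \<in> (\<lambda>(x, e). (x, \<epsilon> *\<^sub>R e)) ` ?B 1"
    then obtain x e where "y = (x, \<epsilon> *\<^sub>R e)" "x \<in> X" and e: "\<forall>j. -1 \<le> e $ j \<and> e $ j \<le> 1"
      by auto
    moreover have "-\<epsilon> \<le> \<epsilon> * e $ j \<and> \<epsilon> * e $ j \<le> \<epsilon>" for j
      using e[rule_format, of j] assms
      by (metis mult.right_neutral mult_minus_right mult_left_mono less_imp_le)
    ultimately show "y \<in> ?B \<epsilon>" by simp
  qed
  then show ?thesis
    by (simp add: image_image split_beta sum_distrib_left mult.left_commute)
qed

theorem proposition3:
  fixes g :: "'p::finite \<Rightarrow> real^'n::finite \<Rightarrow> real"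
    and s :: "'m::finite \<Rightarrow> real^'n \<Rightarrow> real"
    and d :: nat
    and X :: "(real^'n) set"
    and K :: "((real^'n) \<times> (real^'m)) set"
    and l' :: "(real^'n) \<times> (real^'m) \<Rightarrow> real"
    and lower upper :: "nat \<Rightarrow> real"
  assumes g_poly: "\<And>i. poly_fun (g i)"
    and coords: "\<And>q. \<exists>i. g i = (\<lambda>x. x $ q)"
    and X_def: "X = {x. \<forall>i. 0 \<le> g i x \<and> g i x \<le> 1}"
    and X_ne: "X \<noteq> {}"
    and s_poly: "\<And>j. poly_fun_deg d (s j)"
    and l'_def: "l' = (\<lambda>(x, e). \<Sum>j\<in>UNIV. s j x * e $ j)"
    and K_def: "K = {(x, e). x \<in> X \<and> (\<forall>j. -1 \<le> e $ j \<and> e $ j \<le> 1)}"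
    and lower_def: "lower = (\<lambda>k. Sup {t. (\<lambda>y. l' y - t) \<in> HK g k})"
    and upper_def: "upper = (\<lambda>k. Inf {t. (\<lambda>y. t - l' y) \<in> HK g k})"
  shows "(\<forall>k\<ge>d+1. lower k \<le> lower (Suc k)) \<and> lower \<longlonglongrightarrow> Inf (l' ` K)
       \<and> (\<forall>k\<ge>d+1. upper (Suc k) \<le> upper k) \<and> upper \<longlonglongrightarrow> Sup (l' ` K)
       \<and> (\<forall>\<epsilon>>0. (\<lambda>k. \<epsilon> * lower k) \<longlonglongrightarrow>
                    Inf ((\<lambda>(x, e). \<Sum>j\<in>UNIV. s j x * e $ j) `
                         {(x, e). x \<in> X \<and> (\<forall>j. -\<epsilon> \<le> e $ j \<and> e $ j \<le> \<epsilon>)})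
              \<and> (\<lambda>k. \<epsilon> * upper k) \<longlonglongrightarrow>
                    Sup ((\<lambda>(x, e). \<Sum>j\<in>UNIV. s j x * e $ j) `
                         {(x, e). x \<in> X \<and> (\<forall>j. -\<epsilon> \<le> e $ j \<and> e $ j \<le> \<epsilon>)}))"
proof -
  have lower: "\<forall>k\<ge>d+1. lower k \<le> lower (Suc k)" "lower \<longlonglongrightarrow> Inf (l' ` K)"
    using HK_lower_bounds[OF g_poly coords X_def X_ne s_poly l'_def K_def] unfolding lower_def by simp_all
  have "(\<lambda>y. - l' y) = (\<lambda>(x, e). \<Sum>j\<in>UNIV. - s j x * e $ j)"
    by (simp add: l'_def split_beta sum_negf fun_eq_iff)
  note neg = HK_lower_bounds[OF g_poly coords X_def X_ne poly_fun_deg_uminus[OF s_poly] this K_def]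
  have "upper = (\<lambda>k. - Sup {t. (\<lambda>y. - l' y - t) \<in> HK g k})"
    unfolding upper_def Inf_shift_eq_uminus_Sup ..
  moreover have "Sup (l' ` K) = - Inf ((\<lambda>y. - l' y) ` K)"
    by (simp add: Inf_real_def image_image)
  ultimately have upper: "\<forall>k\<ge>d+1. upper (Suc k) \<le> upper k" "upper \<longlonglongrightarrow> Sup (l' ` K)"
    using neg by (auto intro: tendsto_minus)
  have "compact (l' ` K)" "l' ` K \<noteq> {}"
    using compact_linear_form_image[OF poly_fun_imp_coord_poly[OF g_poly] coords X_def X_ne
        poly_fun_deg_imp_coord_poly[OF s_poly] l'_def K_def] by auto
  then have "bdd_below (l' ` K)" "bdd_above (l' ` K)" "l' ` K \<noteq> {}"
    by (auto intro: bounded_imp_bdd_below bounded_imp_bdd_above compact_imp_bounded)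
  moreover have "(\<lambda>(x, e). \<Sum>j\<in>UNIV. s j x * e $ j) ` {(x, e). x \<in> X \<and> (\<forall>j. -\<epsilon> \<le> e $ j \<and> e $ j \<le> \<epsilon>)}
      = (\<lambda>v. \<epsilon> * v) ` (l' ` K)" if "0 < \<epsilon>" for \<epsilon>
    unfolding l'_def K_def by (rule image_linear_form_scaled_box[OF that])
  ultimately show ?thesis
    using lower upper by (simp add: cInf_cmult_image cSup_cmult_image tendsto_mult_left)
qed

end
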